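(* Let $G \le \mathrm{Sym}(\mathbb{N})$ be a countable cofinitary group and let $H$ be a countable group. Then there exist permutations $\vec f = \langle f_n : n \in \mathbb{N}\rangle$ in $\mathrm{Sym}(\mathbb{N})$ such that the subgroup generated by $\{f_n : n\in\mathbb{N}\}$ is isomorphic to $H$ and the subgroup $\langle G, \vec f\,\rangle$ generated by $G \cup \{f_n : n\in\mathbb{N}\}$ is cofinitary.
   Context: $\mathrm{Sym}(\mathbb{N})$ is the group of bijections $\mathbb{N}\to\mathbb{N}$ under composition. A permutation is cofinitary if it is the identity or has only finitely many fixed points; a subgroup of $\mathrm{Sym}(\mathbb{N})$ is cofinitary if all its elements are cofinitary. *)

theory Defs
  imports "HOL-Algebra.Algebra"
begin

text \<open>Sym(N): the group of all bijections of nat under composition.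
  (Extensionality on UNIV is vacuous, so the carrier is exactly the set of bijections.)\<close>
abbreviation SymN :: "(nat \<Rightarrow> nat) monoid" where
  "SymN \<equiv> BijGroup (UNIV :: nat set)"

definition cofinitary_perm :: "(nat \<Rightarrow> nat) \<Rightarrow> bool" where
  "cofinitary_perm g \<longleftrightarrow> g = id \<or> finite {n. g n = n}"

definition cofinitary_group :: "(nat \<Rightarrow> nat) set \<Rightarrow> bool" where
  "cofinitary_group K \<longleftrightarrow> subgroup K SymN \<and> (\<forall>g\<in>K. cofinitary_perm g)"

end

theory Submission
  imports Defs
begin

text \<open>
  We realise \<open>H\<close> as a group of permutations of \<open>\<nat>\<close> acting freely: via a bijection
  \<open>label : \<nat> \<rightarrow> H \<times> \<nat>\<close> each \<open>h\<close> acts by left multiplication on the first coordinate.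
  The bijection is the union of a chain of finite partial bijections built by a
  back-and-forth construction.  At even stages a point receives a label \<open>(1, i)\<close> with a
  fresh orbit index \<open>i\<close>; at odd stages a label receives a preimage chosen outside a finite
  forbidden set, so that the new point is neither fixed by, nor \<open>g\<close>-adjacent to an old
  point for, the finitely many elements \<open>g\<close> of \<open>G\<close> enumerated so far.  Consequently a
  point added at some stage never has both a \<open>G\<close>-neighbour and an \<open>H\<close>-neighbour among
  the points present at that stage.

  The locale
  \<open>cofinitary_extension\<close> then carries out the construction; following a fixed point around
  such a word, the point added last would have neighbours of both sorts, which is
  impossible.
\<close>

lemma SymN_carrier: "f \<in> carrier SymN \<longleftrightarrow> bij f"
  by (simp add: BijGroup_def Bij_def extensional_def bij_betw_def)

lemma SymN_mult: "f \<in> carrier SymN \<Longrightarrow> g \<in> carrier SymN \<Longrightarrow> f \<otimes>\<^bsub>SymN\<^esub> g = f \<circ> g"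
  by (simp add: BijGroup_def compose_def restrict_UNIV o_def)

lemma SymN_one: "\<one>\<^bsub>SymN\<^esub> = id"
  by (simp add: BijGroup_def id_def restrict_UNIV)

lemma SymN_inv: "f \<in> carrier SymN \<Longrightarrow> inv\<^bsub>SymN\<^esub> f = inv_into UNIV f"
  using inv_BijGroup[of f UNIV] by (simp add: BijGroup_def restrict_UNIV)

lemma generate_subgroup_self: "group G \<Longrightarrow> subgroup K G \<Longrightarrow> generate G K = K"
  using group.generate_subgroup_incl[of G K K] generate.incl[of _ K G] by blast

text \<open>
  Fixed points of \<open>s \<circ> t\<close> and \<open>t \<circ> s\<close> correspond via \<open>s\<close>; hence cofinitarity is invariant
  under conjugation, which lets us rotate a word cyclically.\<close>

lemma fixpoints_comp_commute: "{x. (s \<circ> t) x = x} = s ` {x. (t \<circ> s) x = x}"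
proof
  show "{x. (s \<circ> t) x = x} \<subseteq> s ` {x. (t \<circ> s) x = x}"
  proof
    fix x assume "x \<in> {x. (s \<circ> t) x = x}"
    then have "x = s (t x)" "t x \<in> {x. (t \<circ> s) x = x}" by simp_all
    then show "x \<in> s ` {x. (t \<circ> s) x = x}" by (rule image_eqI)
  qed
qed auto

lemma cofinitary_perm_conj:
  assumes "bij s" and "cofinitary_perm (t \<circ> s)"
  shows "cofinitary_perm (s \<circ> t)"
proof (cases "t \<circ> s = id")
  case True
  then have "s ` {x. (t \<circ> s) x = x} = UNIV"
    using bij_is_surj[OF assms(1)] by simp
  then have "s \<circ> t = id"
    unfolding fixpoints_comp_commute[symmetric] by (auto simp: fun_eq_iff)
  then show ?thesis by (simp add: cofinitary_perm_def)
next
  case False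
  then have "finite {x. (t \<circ> s) x = x}"
    using assms(2) by (simp add: cofinitary_perm_def)
  then show ?thesis
    unfolding cofinitary_perm_def fixpoints_comp_commute[of s t] by simp
qed

definition word_eval :: "('l \<Rightarrow> 'x \<Rightarrow> 'x) \<Rightarrow> 'l list \<Rightarrow> 'x \<Rightarrow> 'x" where
  "word_eval e w = foldr (\<lambda>a f. e a \<circ> f) w id"

lemma word_eval_Nil [simp]: "word_eval e [] = id"
  by (simp add: word_eval_def)

lemma word_eval_Cons [simp]: "word_eval e (a # w) = e a \<circ> word_eval e w"
  by (simp add: word_eval_def)

lemma word_eval_append [simp]: "word_eval e (u @ v) = word_eval e u \<circ> word_eval e v"
  by (induction u) auto

lemma generate_SymN_words:
  assumes gens: "A \<subseteq> e ` L" and perms: "\<And>a. a \<in> L \<Longrightarrow> e a \<in> carrier SymN"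
    and inverses: "\<And>a. a \<in> L \<Longrightarrow> \<exists>b\<in>L. e b = inv_into UNIV (e a)"
    and "\<sigma> \<in> generate SymN A"
  shows "\<exists>w. set w \<subseteq> L \<and> \<sigma> = word_eval e w"
  using \<open>\<sigma> \<in> generate SymN A\<close>
proof (induction rule: generate.induct)
  case one
  show ?case by (intro exI[of _ "[]"]) (simp add: SymN_one)
next
  case (incl h)
  then obtain a where "a \<in> L" "h = e a" using gens by blast
  then show ?case by (intro exI[of _ "[a]"]) simp
next
  case (inv h)
  then obtain a where a: "a \<in> L" "h = e a" using gens by blast
  obtain b where b: "b \<in> L" "e b = inv_into UNIV h" using inverses a by blast
  then have "e b = inv\<^bsub>SymN\<^esub> h" using SymN_inv perms a by simp
  then show ?case using b(1) by (intro exI[of _ "[b]"]) simp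
next
  case (eng h1 h2)
  then obtain u v where uv: "set u \<subseteq> L" "h1 = word_eval e u" "set v \<subseteq> L" "h2 = word_eval e v"
    by blast
  have "A \<subseteq> carrier SymN" using gens perms by blast
  then have "h1 \<in> carrier SymN" "h2 \<in> carrier SymN"
    using group.generate_in_carrier[OF group_BijGroup] eng.hyps by blast+
  then have "h1 \<otimes>\<^bsub>SymN\<^esub> h2 = word_eval e (u @ v)" using uv by (simp add: SymN_mult)
  then show ?case using uv by (intro exI[of _ "u @ v"]) simp
qed

definition cyclically_alternating :: "('g + 'h) list \<Rightarrow> bool" where
  "cyclically_alternating w \<longleftrightarrow>
     (\<forall>j. Suc j < length w \<longrightarrow> isl (w ! j) \<noteq> isl (w ! Suc j)) \<and> isl (hd w) \<noteq> isl (last w)"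

text \<open>
  Follow a fixed point \<open>x\<close> of a cyclically alternating word through its letters; the
  resulting finite trail is closed.  Each point on the trail is joined to another trail
  point by a letter of either prescribed sort \<open>P\<close> (one letter enters it, one leaves it).\<close>

lemma cyclic_word_neighbour:
  fixes e :: "'g + 'h \<Rightarrow> 'x \<Rightarrow> 'x"
  assumes alt: "cyclically_alternating w" and len: "2 \<le> length w"
    and fixed: "word_eval e w x = x" and j: "j < length w"
  defines "trail \<equiv> (\<lambda>i. word_eval e (drop i w) x) ` {..<length w}"
  shows "\<exists>a\<in>set w. \<exists>z\<in>trail. isl a = P \<and>
           (e a z = word_eval e (drop j w) x \<or> e a (word_eval e (drop j w) x) = z)"
proof -
  define n where "n = length w"
  define xs where "xs i = word_eval e (drop i w) x" for i
  have step: "xs i = e (w ! i) (xs (Suc i))" if "i < n" for i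
    using that by (simp add: xs_def n_def Cons_nth_drop_Suc[symmetric])
  have wrap: "xs n = xs 0" using fixed by (simp add: xs_def n_def)
  have in_trail: "xs i \<in> trail" if "i \<le> n" for i
  proof (cases "i = n")
    case True
    have "xs 0 \<in> trail" unfolding trail_def xs_def using len by (intro image_eqI[of _ _ 0]) auto
    then show ?thesis using True wrap by simp
  next
    case False
    then show ?thesis using that by (simp add: trail_def xs_def n_def)
  qed
  define p where "p = (if j = 0 then n - 1 else j - 1)"
  have p_less: "p < n" using j len by (auto simp: p_def n_def)
  have p_step: "xs p = e (w ! p) (xs j)"
  proof (cases "j = 0")
    case True
    have "Suc (n - 1) = n" using len by (simp add: n_def)
    then show ?thesis using step[of "n - 1"] len wrap True by (simp add: p_def n_def)
  next
    case False
    then show ?thesis using step[of "j - 1"] j by (simp add: p_def n_def)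
  qed
  have sorts: "isl (w ! j) \<noteq> isl (w ! p)"
  proof (cases "j = 0")
    case True
    have "w \<noteq> []" using len by auto
    moreover have "isl (hd w) \<noteq> isl (last w)" using alt by (simp add: cyclically_alternating_def)
    ultimately show ?thesis using True by (simp add: p_def n_def hd_conv_nth last_conv_nth)
  next
    case False
    then show ?thesis using alt j
      by (simp add: cyclically_alternating_def p_def n_def)
  qed
  have letters: "w ! j \<in> set w" "w ! p \<in> set w"
    using j p_less by (simp_all add: n_def)
  have "\<exists>a\<in>set w. \<exists>z\<in>trail. isl a = P \<and> (e a z = xs j \<or> e a (xs j) = z)"
  proof (cases "isl (w ! j) = P")
    case True
    moreover have "xs (Suc j) \<in> trail" using j by (intro in_trail) (simp add: n_def)
    moreover have "e (w ! j) (xs (Suc j)) = xs j" using step[of j] j by (simp add: n_def)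
    ultimately show ?thesis using letters(1) by (intro bexI[of _ "w ! j"] bexI[of _ "xs (Suc j)"]) simp_all
  next
    case False
    moreover have "xs p \<in> trail" using p_less by (intro in_trail) simp
    ultimately show ?thesis using letters(2) sorts p_step
      by (intro bexI[of _ "w ! p"] bexI[of _ "xs p"]) simp_all
  qed
  then show ?thesis by (simp add: xs_def)
qed

definition reduced_word :: "('g + 'h \<Rightarrow> 'x \<Rightarrow> 'x) \<Rightarrow> ('g + 'h) list \<Rightarrow> bool" where
  "reduced_word e w \<longleftrightarrow>
     (\<forall>a\<in>set w. e a \<noteq> id) \<and> (\<forall>j. Suc j < length w \<longrightarrow> isl (w ! j) \<noteq> isl (w ! Suc j))"

lemma shorten_unreduced_word:
  assumes merge: "\<And>a b. a \<in> L \<Longrightarrow> b \<in> L \<Longrightarrow> isl a = isl b \<Longrightarrow> \<exists>c\<in>L. e c = e a \<circ> e b"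
    and w: "set w \<subseteq> L" "\<not> reduced_word e w"
  obtains v where "set v \<subseteq> L" "length v < length w" "word_eval e v = word_eval e w"
proof -
  consider (adjacent) j where "Suc j < length w" "isl (w ! j) = isl (w ! Suc j)"
    | (trivial) j where "j < length w" "e (w ! j) = id"
    using w(2) by (auto simp: reduced_word_def in_set_conv_nth)
  then show ?thesis
  proof cases
    case (adjacent j)
    then have split: "w = take j w @ w ! j # w ! Suc j # drop (Suc (Suc j)) w"
      by (metis Cons_nth_drop_Suc Suc_lessD append_take_drop_id)
    have "w ! j \<in> set w" "w ! Suc j \<in> set w" using adjacent(1) by simp_all
    then obtain c where c: "c \<in> L" "e c = e (w ! j) \<circ> e (w ! Suc j)"
      using merge adjacent(2) w(1) by blast
    show ?thesis
    proof (rule that)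
      let ?v = "take j w @ c # drop (Suc (Suc j)) w"
      show "set ?v \<subseteq> L" using c(1) w(1) by (auto dest: in_set_takeD in_set_dropD)
      show "length ?v < length w" using adjacent(1) by simp
      show "word_eval e ?v = word_eval e w" using c(2) by (subst (2) split) (simp add: o_assoc)
    qed
  next
    case (trivial j)
    then have split: "w = take j w @ w ! j # drop (Suc j) w"
      by (metis Cons_nth_drop_Suc append_take_drop_id)
    show ?thesis
    proof (rule that)
      let ?v = "take j w @ drop (Suc j) w"
      show "set ?v \<subseteq> L" using w(1) by (auto dest: in_set_takeD in_set_dropD)
      show "length ?v < length w" using trivial(1) by simp
      show "word_eval e ?v = word_eval e w" using trivial(2) by (subst (2) split) simp
    qed
  qed
qed

text \<open>
  Reduction to cyclically alternating words: by shortening and by conjugating (which moves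
  the first letter to the end, where it merges with the last one), every word reduces to
  a single letter or to a cyclically alternating word with nontrivial letters.\<close>

lemma words_cofinitary:
  fixes e :: "'g + 'h \<Rightarrow> nat \<Rightarrow> nat"
  assumes merge: "\<And>a b. a \<in> L \<Longrightarrow> b \<in> L \<Longrightarrow> isl a = isl b \<Longrightarrow> \<exists>c\<in>L. e c = e a \<circ> e b"
    and bij: "\<And>a. a \<in> L \<Longrightarrow> bij (e a)"
    and letters: "\<And>a. a \<in> L \<Longrightarrow> cofinitary_perm (e a)"
    and cyclic: "\<And>w. set w \<subseteq> L \<Longrightarrow> 2 \<le> length w \<Longrightarrow> \<forall>a\<in>set w. e a \<noteq> id \<Longrightarrow>
                   cyclically_alternating w \<Longrightarrow> finite {x. word_eval e w x = x}"
    and "set w \<subseteq> L"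
  shows "cofinitary_perm (word_eval e w)"
  using \<open>set w \<subseteq> L\<close>
proof (induction "length w" arbitrary: w rule: less_induct)
  case less
  show ?case
  proof (cases "reduced_word e w")
    case False
    then obtain v where "set v \<subseteq> L" "length v < length w" "word_eval e v = word_eval e w"
      using shorten_unreduced_word[OF merge less.prems] by blast
    then show ?thesis using less.hyps by metis
  next
    case reduced: True
    consider "w = []" | a where "w = [a]" | a u b where "w = a # u @ [b]"
      by (metis neq_Nil_conv rev_exhaust)
    then show ?thesis
    proof cases
      case (3 a u b)
      have ab: "a \<in> L" "b \<in> L" using less.prems 3 by auto
      show ?thesis
      proof (cases "isl a = isl b")
        case False
        then have "cyclically_alternating w"
          using reduced by (simp add: 3 reduced_word_def cyclically_alternating_def)
        moreover have "2 \<le> length w" "\<forall>a\<in>set w. e a \<noteq> id"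
          using reduced 3 by (simp_all add: reduced_word_def)
        ultimately have "finite {x. word_eval e w x = x}"
          using cyclic[OF less.prems] by blast
        then show ?thesis by (simp add: cofinitary_perm_def)
      next
        case True
        then obtain c where c: "c \<in> L" "e c = e b \<circ> e a" using merge ab by blast
        have "cofinitary_perm (word_eval e (u @ [c]))"
          using less.hyps[of "u @ [c]"] 3 c(1) less.prems by simp
        then have "cofinitary_perm ((word_eval e u \<circ> e b) \<circ> e a)"
          using c(2) by (simp add: o_assoc)
        then have "cofinitary_perm (e a \<circ> (word_eval e u \<circ> e b))"
          by (rule cofinitary_perm_conj[OF bij[OF ab(1)]])
        then show ?thesis using 3 by (simp add: o_assoc)
      qed
    qed (use less.prems letters in \<open>auto simp: cofinitary_perm_def\<close>)
  qed
qed

lemma least_fresh: "finite (S :: nat set) \<Longrightarrow> (LEAST y. y \<notin> S) \<notin> S"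
  using ex_new_if_finite[OF infinite_UNIV_nat] by (rule LeastI_ex)

definition partial_bij :: "('x \<times> 'y) set \<Rightarrow> bool" where
  "partial_bij A \<longleftrightarrow> (\<forall>a\<in>A. \<forall>b\<in>A. (fst a = fst b) = (snd a = snd b))"

lemma partial_bij_insert:
  "partial_bij A \<Longrightarrow> x \<notin> fst ` A \<Longrightarrow> p \<notin> snd ` A \<Longrightarrow> partial_bij (insert (x, p) A)"
  unfolding partial_bij_def by (auto simp: image_iff)

locale cofinitary_extension = H: group H for H :: "('a, 'b) monoid_scheme" +
  fixes G :: "(nat \<Rightarrow> nat) set"
    and enum_G :: "nat \<Rightarrow> nat \<Rightarrow> nat" and enum_labels :: "nat \<Rightarrow> 'a \<times> nat"
  assumes cofinitary_G: "cofinitary_group G"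
    and enum_G: "range enum_G = G" and enum_labels: "range enum_labels = carrier H \<times> UNIV"
begin

lemma G_bij: "g \<in> G \<Longrightarrow> bij g"
  using cofinitary_G by (auto simp: cofinitary_group_def subgroup_def SymN_carrier)

lemma G_cofinitary: "g \<in> G \<Longrightarrow> cofinitary_perm g"
  using cofinitary_G by (auto simp: cofinitary_group_def)

definition forbidden :: "nat \<Rightarrow> (nat \<times> ('a \<times> nat)) set \<Rightarrow> nat set" where
  "forbidden n A = fst ` A \<union>
     (\<Union>g \<in> enum_G ` {..n} - {id}. {x. g x = x} \<union> g ` fst ` A \<union> g -` fst ` A)"

definition extend :: "nat \<Rightarrow> (nat \<times> ('a \<times> nat)) set \<Rightarrow> (nat \<times> ('a \<times> nat)) set" where
  "extend n A =
    (if even n then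
       (if n div 2 \<in> fst ` A then A
        else insert (n div 2, (\<one>\<^bsub>H\<^esub>, LEAST i. i \<notin> snd ` snd ` A)) A)
     else
       (if enum_labels (n div 2) \<in> snd ` A then A
        else insert (LEAST y. y \<notin> forbidden n A, enum_labels (n div 2)) A))"

primrec approx :: "nat \<Rightarrow> (nat \<times> ('a \<times> nat)) set" where
  "approx 0 = {}"
| "approx (Suc n) = extend n (approx n)"

lemma finite_forbidden:
  assumes "finite A" shows "finite (forbidden n A)"
proof -
  have "finite ({x. g x = x} \<union> g ` fst ` A \<union> g -` fst ` A)"
    if "g \<in> enum_G ` {..n} - {id}" for g
  proof -
    have g: "g \<in> G" "g \<noteq> id" using enum_G that by auto
    then have "finite {x. g x = x}" using G_cofinitary[OF g(1)] by (simp add: cofinitary_perm_def)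
    moreover have "finite (g -` fst ` A)"
      using G_bij[OF g(1)] assms by (intro finite_vimageI) (auto simp: bij_def)
    ultimately show ?thesis using assms by simp
  qed
  then show ?thesis unfolding forbidden_def using assms by auto
qed

lemma extend_invariant:
  assumes "finite A" "partial_bij A" "snd ` A \<subseteq> carrier H \<times> UNIV"
  shows "finite (extend n A) \<and> partial_bij (extend n A) \<and> snd ` extend n A \<subseteq> carrier H \<times> UNIV"
proof (cases "even n")
  case True
  let ?i = "LEAST i. i \<notin> snd ` snd ` A"
  have "?i \<notin> snd ` snd ` A" using assms(1) by (intro least_fresh) simp
  then have "(\<one>\<^bsub>H\<^esub>, ?i) \<notin> snd ` A" by (auto simp: image_iff)
  moreover have "\<one>\<^bsub>H\<^esub> \<in> carrier H" by (rule H.one_closed)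
  ultimately show ?thesis
    using assms True partial_bij_insert[OF assms(2)] by (auto simp: extend_def)
next
  case False
  have "(LEAST y. y \<notin> forbidden n A) \<notin> forbidden n A"
    using finite_forbidden[OF assms(1)] by (rule least_fresh)
  then have "(LEAST y. y \<notin> forbidden n A) \<notin> fst ` A" by (simp add: forbidden_def)
  moreover have "enum_labels (n div 2) \<in> carrier H \<times> UNIV" using enum_labels by auto
  ultimately show ?thesis
    using assms False partial_bij_insert[OF assms(2)] by (auto simp: extend_def)
qed

lemma approx_invariant:
  "finite (approx n) \<and> partial_bij (approx n) \<and> snd ` approx n \<subseteq> carrier H \<times> UNIV"
proof (induction n)
  case 0
  show ?case by (simp add: partial_bij_def)
next
  case (Suc n)
  then show ?case using extend_invariant by simp
qed

lemma approx_mono: "m \<le> n \<Longrightarrow> approx m \<subseteq> approx n"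
  by (rule lift_Suc_mono_le[of approx]) (auto simp: extend_def)

lemma approx_covers_points: "n \<in> fst ` approx (Suc (2 * n))"
  by (auto simp: extend_def)

lemma approx_covers_labels: "enum_labels m \<in> snd ` approx (Suc (Suc (2 * m)))"
proof -
  have "odd (Suc (2 * m))" "Suc (2 * m) div 2 = m" by simp_all
  then show ?thesis
    by (simp only: approx.simps(2) extend_def if_False if_True) auto
qed

definition labelling :: "(nat \<times> ('a \<times> nat)) set" where
  "labelling = (\<Union>n. approx n)"

definition label :: "nat \<Rightarrow> 'a \<times> nat" where
  "label x = (SOME p. (x, p) \<in> labelling)"

definition point :: "'a \<times> nat \<Rightarrow> nat" where
  "point p = (SOME x. (x, p) \<in> labelling)"

definition act :: "'a \<Rightarrow> nat \<Rightarrow> nat" where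
  "act h x = point (h \<otimes>\<^bsub>H\<^esub> fst (label x), snd (label x))"

lemma labelling_partial_bij: "partial_bij labelling"
  unfolding partial_bij_def
proof (intro ballI)
  fix a b assume "a \<in> labelling" "b \<in> labelling"
  then obtain m n where "a \<in> approx m" "b \<in> approx n" by (auto simp: labelling_def)
  then have "a \<in> approx (max m n)" "b \<in> approx (max m n)"
    using approx_mono[of m "max m n"] approx_mono[of n "max m n"] by auto
  then show "(fst a = fst b) = (snd a = snd b)"
    using approx_invariant[of "max m n"] unfolding partial_bij_def by blast
qed

lemma labelling_range: "(x, p) \<in> labelling \<Longrightarrow> p \<in> carrier H \<times> UNIV"
  using approx_invariant by (fastforce simp: labelling_def)

lemma label_in: "(x, label x) \<in> labelling"
proof -
  obtain p where "(x, p) \<in> approx (Suc (2 * x))" using approx_covers_points[of x] by force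
  then have "\<exists>p. (x, p) \<in> labelling" unfolding labelling_def by blast
  then show ?thesis unfolding label_def by (rule someI_ex)
qed

lemma point_in: "p \<in> carrier H \<times> UNIV \<Longrightarrow> (point p, p) \<in> labelling"
proof -
  assume "p \<in> carrier H \<times> UNIV"
  then obtain m where "p = enum_labels m" using enum_labels by (metis rangeE)
  then obtain x where "(x, p) \<in> approx (Suc (Suc (2 * m)))" using approx_covers_labels[of m] by force
  then have "\<exists>x. (x, p) \<in> labelling" unfolding labelling_def by blast
  then show ?thesis unfolding point_def by (rule someI_ex)
qed

lemma label_eq: "(x, p) \<in> labelling \<Longrightarrow> label x = p"
proof -
  assume "(x, p) \<in> labelling"
  with label_in[of x] labelling_partial_bij
  have "(fst (x, label x) = fst (x, p)) = (snd (x, label x) = snd (x, p))"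
    unfolding partial_bij_def by blast
  then show ?thesis by simp
qed

lemma label_carrier: "label x \<in> carrier H \<times> UNIV"
  using labelling_range label_in by blast

lemma label_point: "p \<in> carrier H \<times> UNIV \<Longrightarrow> label (point p) = p"
  using label_eq point_in by blast

lemma point_label: "point (label x) = x"
proof -
  from point_in[OF label_carrier[of x]] label_in[of x] labelling_partial_bij
  have "(fst (point (label x), label x) = fst (x, label x)) = (snd (point (label x), label x) = snd (x, label x))"
    unfolding partial_bij_def by blast
  then show ?thesis by simp
qed

lemma label_act: "h \<in> carrier H \<Longrightarrow> label (act h x) = (h \<otimes>\<^bsub>H\<^esub> fst (label x), snd (label x))"
  unfolding act_def using label_carrier[of x] by (intro label_point) auto

lemma act_mult:
  assumes "h \<in> carrier H" "k \<in> carrier H"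
  shows "act h \<circ> act k = act (h \<otimes>\<^bsub>H\<^esub> k)"
proof
  fix x
  have "fst (label x) \<in> carrier H" using label_carrier[of x] by auto
  then have "h \<otimes>\<^bsub>H\<^esub> (k \<otimes>\<^bsub>H\<^esub> fst (label x)) = (h \<otimes>\<^bsub>H\<^esub> k) \<otimes>\<^bsub>H\<^esub> fst (label x)"
    using assms by (simp add: H.m_assoc)
  then show "(act h \<circ> act k) x = act (h \<otimes>\<^bsub>H\<^esub> k) x"
    by (simp add: act_def[of h] act_def[of "h \<otimes>\<^bsub>H\<^esub> k"] label_act[OF assms(2)])
qed

lemma act_one: "act \<one>\<^bsub>H\<^esub> = id"
proof
  fix x
  have "fst (label x) \<in> carrier H" using label_carrier[of x] by auto
  then show "act \<one>\<^bsub>H\<^esub> x = id x"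
    using point_label[of x] by (simp add: act_def)
qed

lemma act_inverse:
  assumes "h \<in> carrier H"
  shows "act h \<circ> act (inv\<^bsub>H\<^esub> h) = id" "act (inv\<^bsub>H\<^esub> h) \<circ> act h = id"
  using act_mult[OF assms H.inv_closed[OF assms]] act_mult[OF H.inv_closed[OF assms] assms] assms
  by (simp_all add: act_one)

lemma act_bij: "h \<in> carrier H \<Longrightarrow> bij (act h)"
  using o_bij act_inverse by blast

lemma act_free: "h \<in> carrier H \<Longrightarrow> act h x = x \<Longrightarrow> h = \<one>\<^bsub>H\<^esub>"
proof -
  assume h: "h \<in> carrier H" and fixed: "act h x = x"
  have "fst (label x) \<in> carrier H" using label_carrier[of x] by auto
  moreover have "h \<otimes>\<^bsub>H\<^esub> fst (label x) = fst (label x)"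
    using label_act[OF h, of x] fixed by (metis fst_conv)
  ultimately show ?thesis using H.r_cancel_one[OF _ h] by blast
qed

lemma act_inj: "inj_on act (carrier H)"
proof (rule inj_onI)
  fix h k assume h: "h \<in> carrier H" and k: "k \<in> carrier H" and eq: "act h = act k"
  let ?x = "point (\<one>\<^bsub>H\<^esub>, 0)"
  have x: "label ?x = (\<one>\<^bsub>H\<^esub>, 0)" by (intro label_point) simp
  have "(h, 0) = label (act h ?x)" using label_act[OF h, of ?x] x h by simp
  also have "\<dots> = label (act k ?x)" using eq by (rule arg_cong)
  also have "\<dots> = (k, 0)" using label_act[OF k, of ?x] x k by simp
  finally show "h = k" by simp
qed

lemma act_hom: "act \<in> hom H SymN"
  using act_bij act_mult by (auto simp: hom_def SymN_carrier SymN_mult)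

lemma act_fixpoint_free: "h \<in> carrier H \<Longrightarrow> act h \<noteq> id \<Longrightarrow> act h x \<noteq> x"
  using act_free act_one by blast

lemma act_preserves_orbit_index: "h \<in> carrier H \<Longrightarrow> snd (label (act h x)) = snd (label x)"
  by (simp add: label_act)

definition dom_approx :: "nat \<Rightarrow> nat set" where
  "dom_approx m = fst ` approx m"

definition stage :: "nat \<Rightarrow> nat" where
  "stage x = (LEAST m. x \<in> dom_approx (Suc m))"

lemma dom_approx_mono: "m \<le> n \<Longrightarrow> dom_approx m \<subseteq> dom_approx n"
  unfolding dom_approx_def using approx_mono by blast

lemma approx_label: "(x, p) \<in> approx m \<Longrightarrow> label x = p"
  by (rule label_eq) (auto simp: labelling_def)

lemma stage_dom: "x \<in> dom_approx (Suc (stage x))"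
proof -
  have "\<exists>m. x \<in> dom_approx (Suc m)"
    using approx_covers_points[of x] unfolding dom_approx_def by blast
  then show ?thesis unfolding stage_def by (rule LeastI_ex)
qed

lemma stage_not_dom: "x \<notin> dom_approx (stage x)"
proof (cases "stage x")
  case (Suc k)
  then have "\<not> x \<in> dom_approx (Suc k)" unfolding stage_def by (metis lessI not_less_Least)
  then show ?thesis using Suc by simp
qed (simp add: dom_approx_def)

lemma latest_point:
  assumes "finite S" "S \<noteq> {}"
  obtains y where "y \<in> S" "S \<subseteq> dom_approx (Suc (stage y))"
proof -
  have "Max (stage ` S) \<in> stage ` S" using assms by (intro Max_in) auto
  then obtain y where y: "y \<in> S" "stage y = Max (stage ` S)" by (metis imageE)
  have "z \<in> dom_approx (Suc (stage y))" if "z \<in> S" for z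
  proof -
    have "stage z \<le> stage y" using y(2) assms that by simp
    then show ?thesis using stage_dom[of z] dom_approx_mono[of "Suc (stage z)"] by blast
  qed
  then show ?thesis using that y(1) by blast
qed

lemma new_point_even:
  assumes new: "y \<in> dom_approx (Suc M)" "y \<notin> dom_approx M" and "even M"
    and z: "z \<in> dom_approx (Suc M)" "snd (label z) = snd (label y)"
  shows "z = y"
proof (rule ccontr)
  assume "z \<noteq> y"
  let ?i = "LEAST i. i \<notin> snd ` snd ` approx M"
  have "approx (Suc M) \<noteq> approx M" using new by (auto simp: dom_approx_def)
  then have step: "approx (Suc M) = insert (M div 2, (\<one>\<^bsub>H\<^esub>, ?i)) (approx M)"
    using \<open>even M\<close> by (simp add: extend_def split: if_splits)
  then have y: "y = M div 2" using new by (auto simp: dom_approx_def)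
  then have "label y = (\<one>\<^bsub>H\<^esub>, ?i)" using step by (intro approx_label[of _ _ "Suc M"]) simp
  obtain p where p: "(z, p) \<in> approx M"
    using z(1) step y \<open>z \<noteq> y\<close> by (auto simp: dom_approx_def)
  have "snd p = ?i"
    using approx_label[OF p] z(2) \<open>label y = (\<one>\<^bsub>H\<^esub>, ?i)\<close> by simp
  have "p \<in> snd ` approx M" using p by (rule rev_image_eqI) simp
  then have "?i \<in> snd ` snd ` approx M" by (rule rev_image_eqI) (simp add: \<open>snd p = ?i\<close>)
  moreover have "?i \<notin> snd ` snd ` approx M"
    using approx_invariant by (intro least_fresh) simp
  ultimately show False by blast
qed

lemma new_point_odd:
  assumes new: "y \<in> dom_approx (Suc M)" "y \<notin> dom_approx M" and "odd M"
    and g: "g \<in> enum_G ` {..M}" "g \<noteq> id"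
    and z: "z \<in> dom_approx (Suc M)" "g z = y \<or> g y = z"
  shows False
proof -
  let ?y = "LEAST y. y \<notin> forbidden M (approx M)"
  have "approx (Suc M) \<noteq> approx M" using new by (auto simp: dom_approx_def)
  then have step: "approx (Suc M) = insert (?y, enum_labels (M div 2)) (approx M)"
    using \<open>odd M\<close> by (simp add: extend_def split: if_splits)
  then have "y = ?y" using new by (auto simp: dom_approx_def)
  moreover have "?y \<notin> forbidden M (approx M)"
    using finite_forbidden approx_invariant by (intro least_fresh) blast
  moreover have "z = y \<or> z \<in> fst ` approx M"
    using z(1) step \<open>y = ?y\<close> by (auto simp: dom_approx_def)
  then have "y \<in> {x. g x = x} \<union> g ` fst ` approx M \<union> g -` fst ` approx M"
    using z(2) by auto
  moreover have "{x. g x = x} \<union> g ` fst ` approx M \<union> g -` fst ` approx M \<subseteq> forbidden M (approx M)"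
    using g unfolding forbidden_def by blast
  ultimately show False by blast
qed

lemma new_point_isolated:
  assumes new: "y \<in> dom_approx (Suc M)" "y \<notin> dom_approx M"
    and g: "g \<in> enum_G ` {..M}" "g \<noteq> id"
    and z: "z \<in> dom_approx (Suc M)" "g z = y \<or> g y = z"
    and h: "h \<in> carrier H" "act h \<noteq> id"
    and z': "z' \<in> dom_approx (Suc M)" "act h z' = y \<or> act h y = z'"
  shows False
proof (cases "even M")
  case True
  have "snd (label z') = snd (label y)"
    using z'(2) act_preserves_orbit_index[OF h(1)] by metis
  then have "z' = y" using new_point_even[OF new True z'(1)] by blast
  then show False using z'(2) act_fixpoint_free[OF h] by metis
next
  case False
  then show False using new_point_odd[OF new _ g z] by blast
qed

definition letter_perm :: "(nat \<Rightarrow> nat) + 'a \<Rightarrow> nat \<Rightarrow> nat" where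
  "letter_perm a = (case a of Inl g \<Rightarrow> g | Inr h \<Rightarrow> act h)"

definition alphabet :: "((nat \<Rightarrow> nat) + 'a) set" where
  "alphabet = Inl ` G \<union> Inr ` carrier H"

lemma letter_perm_simps [simp]: "letter_perm (Inl g) = g" "letter_perm (Inr h) = act h"
  by (simp_all add: letter_perm_def)

lemma letters_bounded: "finite B \<Longrightarrow> B \<subseteq> G \<Longrightarrow> \<exists>m. B \<subseteq> enum_G ` {..m}"
proof -
  assume "finite B" "B \<subseteq> G"
  let ?index = "inv_into UNIV enum_G"
  have "B \<subseteq> enum_G ` (?index ` B)"
  proof
    fix g assume "g \<in> B"
    then have "g = enum_G (?index g)" using \<open>B \<subseteq> G\<close> enum_G by (auto simp: f_inv_into_f)
    then show "g \<in> enum_G ` (?index ` B)" using \<open>g \<in> B\<close> by blast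
  qed
  moreover obtain m where "?index ` B \<subseteq> {..<m}"
    using finite_nat_bounded[of "?index ` B"] \<open>finite B\<close> by blast
  then have "?index ` B \<subseteq> {..m}" by auto
  ultimately show ?thesis by (meson image_mono order_trans)
qed

text \<open>
  The key estimate: fixed points of a cyclically alternating word lie in the domain at the
  stage \<open>m0\<close> by which all its \<open>G\<close>-letters are enumerated.  Otherwise the point of
  maximal stage on the trail of the fixed point would be added at a stage \<open>M \<ge> m0\<close> with
  neighbours of both sorts.\<close>

lemma alternating_word_fixpoints:
  assumes w: "set w \<subseteq> alphabet" "2 \<le> length w" "\<forall>a\<in>set w. letter_perm a \<noteq> id"
    "cyclically_alternating w"
  shows "finite {x. word_eval letter_perm w x = x}"
proof -
  have "finite (Inl -` set w :: (nat \<Rightarrow> nat) set)" by (rule finite_vimageI) (auto simp: inj_on_def)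
  moreover have "Inl -` set w \<subseteq> G" using w(1) by (auto simp: alphabet_def)
  ultimately obtain m0 where m0: "Inl -` set w \<subseteq> enum_G ` {..m0}" using letters_bounded by blast
  have "{x. word_eval letter_perm w x = x} \<subseteq> dom_approx m0"
  proof (rule subsetI, rule ccontr)
    fix x assume "x \<in> {x. word_eval letter_perm w x = x}" and x: "x \<notin> dom_approx m0"
    then have fixed: "word_eval letter_perm w x = x" by simp
    define trail where "trail = (\<lambda>i. word_eval letter_perm (drop i w) x) ` {..<length w}"
    have "finite trail" "x \<in> trail"
      using w(2) fixed by (auto simp: trail_def intro!: image_eqI[of _ _ 0])
    then obtain y where "y \<in> trail" and trail: "trail \<subseteq> dom_approx (Suc (stage y))"
      using latest_point by blast
    then obtain j where j: "j < length w" "y = word_eval letter_perm (drop j w) x"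
      by (auto simp: trail_def)
    define M where "M = stage y"
    have new: "y \<in> dom_approx (Suc M)" "y \<notin> dom_approx M"
      using stage_dom stage_not_dom by (simp_all add: M_def)
    have "m0 \<le> M"
      using x trail \<open>x \<in> trail\<close> dom_approx_mono[of "Suc M" m0] by (force simp: M_def)
    obtain a z where a: "a \<in> set w" "isl a" and z: "z \<in> trail"
        "letter_perm a z = y \<or> letter_perm a y = z"
      using cyclic_word_neighbour[OF w(4) w(2) fixed j(1), of True] by (auto simp: j(2) trail_def)
    obtain g where g: "a = Inl g" using a(2) by (cases a) auto
    have "g \<in> enum_G ` {..M}" using m0 a(1) g \<open>m0 \<le> M\<close> by (fastforce simp: vimage_def)
    moreover have "g \<noteq> id" using w(3) a(1) g by force
    obtain b z' where b: "b \<in> set w" "\<not> isl b" and z': "z' \<in> trail"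
        "letter_perm b z' = y \<or> letter_perm b y = z'"
      using cyclic_word_neighbour[OF w(4) w(2) fixed j(1), of False] by (auto simp: j(2) trail_def)
    obtain h where h: "b = Inr h" using b(2) by (cases b) auto
    have "h \<in> carrier H" "act h \<noteq> id" using w(1,3) b(1) h by (auto simp: alphabet_def)
    then show False
      using new_point_isolated[OF new \<open>g \<in> enum_G ` {..M}\<close> \<open>g \<noteq> id\<close>] z z' g h trail
      by (auto simp: M_def)
  qed
  moreover have "finite (dom_approx m0)" using approx_invariant by (simp add: dom_approx_def)
  ultimately show ?thesis by (rule finite_subset)
qed

lemma G_subgroup: "subgroup G SymN"
  using cofinitary_G by (simp add: cofinitary_group_def)

lemma letter_perm_bij: "a \<in> alphabet \<Longrightarrow> bij (letter_perm a)"
  using G_bij act_bij by (auto simp: alphabet_def)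

lemma alphabet_merge:
  assumes "a \<in> alphabet" "b \<in> alphabet" "isl a = isl b"
  shows "\<exists>c\<in>alphabet. letter_perm c = letter_perm a \<circ> letter_perm b"
proof (cases a)
  case (Inl g)
  then obtain g' where "b = Inl g'" "g \<in> G" "g' \<in> G" using assms by (auto simp: alphabet_def)
  moreover have "g \<otimes>\<^bsub>SymN\<^esub> g' \<in> G" if "g \<in> G" "g' \<in> G"
    using G_subgroup that by (rule subgroup.m_closed)
  ultimately show ?thesis using Inl G_bij
    by (intro bexI[of _ "Inl (g \<circ> g')"]) (auto simp: alphabet_def SymN_mult SymN_carrier)
next
  case (Inr h)
  then obtain h' where "b = Inr h'" "h \<in> carrier H" "h' \<in> carrier H" using assms by (auto simp: alphabet_def)
  then show ?thesis using Inr act_mult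
    by (intro bexI[of _ "Inr (h \<otimes>\<^bsub>H\<^esub> h')"]) (auto simp: alphabet_def)
qed

lemma letter_perm_cofinitary: "a \<in> alphabet \<Longrightarrow> cofinitary_perm (letter_perm a)"
proof (cases a)
  case (Inl g)
  moreover assume "a \<in> alphabet"
  ultimately show ?thesis using G_cofinitary by (auto simp: alphabet_def)
next
  case (Inr h)
  moreover assume "a \<in> alphabet"
  ultimately have "h \<in> carrier H" by (auto simp: alphabet_def)
  then have "act h = id \<or> {x. act h x = x} = {}" using act_fixpoint_free by blast
  then show ?thesis using Inr by (auto simp: cofinitary_perm_def)
qed

lemma letter_perm_inverse: "a \<in> alphabet \<Longrightarrow> \<exists>b\<in>alphabet. letter_perm b = inv_into UNIV (letter_perm a)"
proof (cases a)
  case (Inl g)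
  moreover assume "a \<in> alphabet"
  ultimately have "g \<in> G" by (auto simp: alphabet_def)
  then have "inv\<^bsub>SymN\<^esub> g \<in> G" using G_subgroup by (rule subgroup.m_inv_closed[rotated])
  then show ?thesis using Inl \<open>g \<in> G\<close> G_bij
    by (intro bexI[of _ "Inl (inv\<^bsub>SymN\<^esub> g)"]) (auto simp: alphabet_def SymN_inv SymN_carrier)
next
  case (Inr h)
  moreover assume "a \<in> alphabet"
  ultimately have h: "h \<in> carrier H" by (auto simp: alphabet_def)
  then have "inv_into UNIV (act h) = act (inv\<^bsub>H\<^esub> h)" using act_inverse by (intro inv_unique_comp)
  then show ?thesis using Inr h by (intro bexI[of _ "Inr (inv\<^bsub>H\<^esub> h)"]) (auto simp: alphabet_def)
qed

theorem extension_cofinitary: "cofinitary_group (generate SymN (G \<union> act ` carrier H))"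
  unfolding cofinitary_group_def
proof (intro conjI ballI)
  have "G \<union> act ` carrier H \<subseteq> carrier SymN"
    using G_bij act_bij by (auto simp: SymN_carrier)
  then show "subgroup (generate SymN (G \<union> act ` carrier H)) SymN"
    by (rule group.generate_is_subgroup[OF group_BijGroup])
  fix \<sigma> assume \<sigma>: "\<sigma> \<in> generate SymN (G \<union> act ` carrier H)"
  have gens: "G \<union> act ` carrier H \<subseteq> letter_perm ` alphabet"
    unfolding alphabet_def image_Un image_image by simp
  have perms: "letter_perm a \<in> carrier SymN" if "a \<in> alphabet" for a
    using letter_perm_bij[OF that] by (simp add: SymN_carrier)
  obtain w where "set w \<subseteq> alphabet" "\<sigma> = word_eval letter_perm w"
    using generate_SymN_words[OF gens perms letter_perm_inverse \<sigma>] by blast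
  then show "cofinitary_perm \<sigma>"
    using words_cofinitary[OF alphabet_merge letter_perm_bij letter_perm_cofinitary
        alternating_word_fixpoints] by blast
qed

lemma act_image_subgroup: "subgroup (act ` carrier H) SymN"
proof -
  have "group_hom H SymN act"
    by (simp add: group_hom_def group_hom_axioms_def act_hom group_BijGroup H.group_axioms)
  then show ?thesis by (rule group_hom.img_is_subgroup)
qed

lemma act_image_iso: "SymN\<lparr>carrier := act ` carrier H\<rparr> \<cong> H"
proof -
  have "act \<in> iso H (SymN\<lparr>carrier := act ` carrier H\<rparr>)"
    using act_hom act_inj unfolding iso_def hom_def by (auto simp: bij_betw_def)
  then show ?thesis using is_isoI H.iso_sym by blast
qed

end

theorem mainTheorem11:
  fixes G :: "(nat \<Rightarrow> nat) set" and H :: "('a, 'b) monoid_scheme"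
  assumes "cofinitary_group G" and "countable G"
    and "group H" and "countable (carrier H)"
  shows "\<exists>f :: nat \<Rightarrow> (nat \<Rightarrow> nat).
           (\<forall>n. f n \<in> carrier SymN)
         \<and> SymN\<lparr>carrier := generate SymN (range f)\<rparr> \<cong> H
         \<and> cofinitary_group (generate SymN (G \<union> range f))"
proof -
  have G_ne: "G \<noteq> {}"
    using assms(1) subgroup.one_closed by (auto simp: cofinitary_group_def)
  have H_ne: "carrier H \<noteq> {}" using monoid.one_closed[OF group.is_monoid[OF assms(3)]] by blast
  let ?labels = "carrier H \<times> (UNIV :: nat set)"
  have "range (from_nat_into ?labels) = ?labels"
    using H_ne assms(4) by (intro range_from_nat_into) simp_all
  then interpret ext: cofinitary_extension H G "from_nat_into G" "from_nat_into ?labels"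
    using assms range_from_nat_into[OF G_ne assms(2)]
    by (simp add: cofinitary_extension_def cofinitary_extension_axioms_def)
  define f where "f n = ext.act (from_nat_into (carrier H) n)" for n
  have range_f: "range f = ext.act ` carrier H"
    using range_from_nat_into[OF H_ne assms(4)] unfolding f_def by (metis image_image)
  have "generate SymN (range f) = range f"
    unfolding range_f using group_BijGroup ext.act_image_subgroup by (rule generate_subgroup_self)
  then show ?thesis
    using ext.act_bij ext.act_image_iso ext.extension_cofinitary range_f
    by (intro exI[of _ f]) (auto simp: f_def SymN_carrier from_nat_into[OF H_ne])
qed

end
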